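(* (ZFC) If $\kappa$ is a singular cardinal, then there is no minimal access ideal on $\kappa$. In particular, for the natural well-ordering $<$ of $\kappa$, $Seg(<)$ is not a minimal access ideal for $\kappa$; more precisely, for every preordering $\preccurlyeq$ of $\kappa$ there is a preordering $\preccurlyeq_1$ of $\kappa$ with $Seg(\preccurlyeq_1)\subsetneq Seg(\preccurlyeq)$.
   Context: An ideal on a set $X$ is a collection $\mathcal I$ of subsets of $X$ such that (i) $Y_1,Y_2\in\mathcal I\Rightarrow Y_1\cup Y_2\in\mathcal I$, (ii) $Y\in\mathcal I$, $Z\subseteq Y\Rightarrow Z\in\mathcal I$, (iii) $X\notin\mathcal I$. A preordering of $X$ is a reflexive, transitive, total binary relation $\preccurlyeq$ on $X$; throughout, all preorderings are assumed to have no last element. For $x\in X$ let ${\preccurlyeq_x}=\{y\in X:y\preccurlyeq x\}$. $Seg(\preccurlyeq)$ denotes the ideal of subsets $Y\subseteq X$ with $Y\subseteq{\preccurlyeq_x}$ for some $x\in X$. An ideal $\mathcal I$ on $X$ is an access ideal for $X$ if there is a preordering $\preccurlyeq$ of $X$ with $Seg(\preccurlyeq)\subseteq\mathcal I$. $\mathcal I$ is a minimal access ideal for $X$ if it is an access ideal for $X$ and for no ideal $\mathcal J\subsetneq\mathcal I$ is $\mathcal J$ an access ideal for $X$. *)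

theory Defs
  imports Main
begin

definition is_ideal :: "'a set \<Rightarrow> 'a set set \<Rightarrow> bool" where
  "is_ideal X I \<longleftrightarrow> I \<subseteq> Pow X
     \<and> (\<forall>Y1\<in>I. \<forall>Y2\<in>I. Y1 \<union> Y2 \<in> I)
     \<and> (\<forall>Y\<in>I. \<forall>Z. Z \<subseteq> Y \<longrightarrow> Z \<in> I)
     \<and> X \<notin> I"

definition preordering_of :: "'a set \<Rightarrow> 'a rel \<Rightarrow> bool" where
  "preordering_of X R \<longleftrightarrow> R \<subseteq> X \<times> X \<and> refl_on X R \<and> trans R \<and> total_on X R
     \<and> (\<forall>x\<in>X. \<exists>y\<in>X. (y, x) \<notin> R)"

definition seg_below :: "'a rel \<Rightarrow> 'a \<Rightarrow> 'a set" where
  "seg_below R x = {y. (y, x) \<in> R}"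

definition Seg :: "'a set \<Rightarrow> 'a rel \<Rightarrow> 'a set set" where
  "Seg X R = {Y. Y \<subseteq> X \<and> (\<exists>x\<in>X. Y \<subseteq> seg_below R x)}"

definition access_ideal :: "'a set \<Rightarrow> 'a set set \<Rightarrow> bool" where
  "access_ideal X I \<longleftrightarrow> is_ideal X I \<and> (\<exists>R. preordering_of X R \<and> Seg X R \<subseteq> I)"

definition minimal_access_ideal :: "'a set \<Rightarrow> 'a set set \<Rightarrow> bool" where
  "minimal_access_ideal X I \<longleftrightarrow> access_ideal X I
     \<and> \<not> (\<exists>J. is_ideal X J \<and> J \<subset> I \<and> access_ideal X J)"

definition singular_card :: "'a rel \<Rightarrow> bool" where
  "singular_card r \<longleftrightarrow> Card_order r \<and> infinite (Field r) \<and> \<not> regularCard r"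

end

theory Submission
  imports Defs
begin

text \<open>Let \<open>\<preccurlyeq>\<close> be a preordering of a singular \<open>\<kappa>\<close>. Choose a cofinal set \<open>K\<close> of size \<open>< \<kappa>\<close>;
  if every set of size \<open>< \<kappa>\<close> were bounded, then so would be each initial segment below an
  element of \<open>K\<close>, then the set of their bounds, and finally all of \<open>\<kappa>\<close>. So some set \<open>C\<close> of
  size \<open>< \<kappa>\<close> is unbounded; its elements' segments cover \<open>\<kappa>\<close>, so by counting one of them,
  \<open>S = {y. y \<preccurlyeq> x\<^sub>0}\<close>, has at least \<open>|C|\<close> elements. Map \<open>S\<close> onto \<open>C\<close> by \<open>g\<close> and push each
  \<open>a \<in> S\<close> up to \<open>max(a, g a)\<close>: the induced preordering has all its segments bounded for \<open>\<preccurlyeq>\<close>,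
  but \<open>S\<close> is no longer bounded in it. Hence \<open>Seg\<close> of a preordering can always be shrunk,
  and no access ideal is minimal.\<close>

unbundle cardinal_syntax

lemma preordering_of_refl: "preordering_of X R \<Longrightarrow> a \<in> X \<Longrightarrow> (a, a) \<in> R"
  unfolding preordering_of_def refl_on_def by auto

lemma preordering_of_trans: "preordering_of X R \<Longrightarrow> (a, b) \<in> R \<Longrightarrow> (b, c) \<in> R \<Longrightarrow> (a, c) \<in> R"
  unfolding preordering_of_def trans_def by blast

lemma preordering_of_total:
  "preordering_of X R \<Longrightarrow> a \<in> X \<Longrightarrow> b \<in> X \<Longrightarrow> (a, b) \<in> R \<or> (b, a) \<in> R"
  unfolding preordering_of_def total_on_def refl_on_def by metis

lemma preordering_of_no_last: "preordering_of X R \<Longrightarrow> x \<in> X \<Longrightarrow> \<exists>y\<in>X. (y, x) \<notin> R"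
  unfolding preordering_of_def by auto

lemma seg_below_subset: "preordering_of X R \<Longrightarrow> seg_below R x \<subseteq> X"
  unfolding preordering_of_def seg_below_def by auto

lemma seg_below_mono: "preordering_of X R \<Longrightarrow> (a, b) \<in> R \<Longrightarrow> seg_below R a \<subseteq> seg_below R b"
  unfolding seg_below_def by (auto intro: preordering_of_trans)

lemma seg_below_in_Seg: "preordering_of X R \<Longrightarrow> x \<in> X \<Longrightarrow> seg_below R x \<in> Seg X R"
  unfolding Seg_def using seg_below_subset by fastforce

lemma carrier_notin_Seg:
  assumes "preordering_of X R"
  shows "X \<notin> Seg X R"
proof
  assume "X \<in> Seg X R"
  then obtain x where "x \<in> X" "X \<subseteq> seg_below R x" unfolding Seg_def by blast
  then show False using preordering_of_no_last[OF assms] unfolding seg_below_def by blast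
qed

lemma Seg_Un:
  assumes P: "preordering_of X R" and "Y1 \<in> Seg X R" and "Y2 \<in> Seg X R"
  shows "Y1 \<union> Y2 \<in> Seg X R"
proof -
  obtain a b where ab: "a \<in> X" "b \<in> X" and "Y1 \<subseteq> X" "Y2 \<subseteq> X"
    and Y: "Y1 \<subseteq> seg_below R a" "Y2 \<subseteq> seg_below R b"
    using assms unfolding Seg_def by blast
  consider "(a, b) \<in> R" | "(b, a) \<in> R" using preordering_of_total[OF P ab] by blast
  then have "\<exists>x\<in>X. Y1 \<union> Y2 \<subseteq> seg_below R x"
    using ab Y seg_below_mono[OF P] by cases blast+
  with \<open>Y1 \<subseteq> X\<close> \<open>Y2 \<subseteq> X\<close> show ?thesis unfolding Seg_def by blast
qed

lemma Seg_is_ideal: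
  assumes P: "preordering_of X R"
  shows "is_ideal X (Seg X R)"
proof -
  have "Seg X R \<subseteq> Pow X" "\<forall>Y\<in>Seg X R. \<forall>Z. Z \<subseteq> Y \<longrightarrow> Z \<in> Seg X R"
    unfolding Seg_def by blast+
  moreover have "\<forall>Y1\<in>Seg X R. \<forall>Y2\<in>Seg X R. Y1 \<union> Y2 \<in> Seg X R" using Seg_Un[OF P] by blast
  ultimately show ?thesis unfolding is_ideal_def using carrier_notin_Seg[OF P] by blast
qed

lemma finite_in_Seg:
  assumes P: "preordering_of X R" and "X \<noteq> {}" and "finite Y" and "Y \<subseteq> X"
  shows "Y \<in> Seg X R"
  using assms(3,4)
proof (induction Y rule: finite_induct)
  case empty
  then show ?case using \<open>X \<noteq> {}\<close> unfolding Seg_def by auto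
next
  case (insert a F)
  have "a \<in> seg_below R a" "a \<in> X"
    using insert.prems preordering_of_refl[OF P] unfolding seg_below_def by auto
  then have "{a} \<in> Seg X R" unfolding Seg_def by blast
  moreover have "F \<in> Seg X R" using insert.IH insert.prems by blast
  ultimately show ?case using Seg_Un[OF P] by (metis insert_is_Un)
qed

lemma unbounded_covered_by_segments:
  assumes P: "preordering_of X R" and "Y \<subseteq> X" and "Y \<notin> Seg X R"
  shows "X \<subseteq> (\<Union>c\<in>Y. seg_below R c)"
proof
  fix x assume x: "x \<in> X"
  then obtain c where "c \<in> Y" "(c, x) \<notin> R"
    using assms(2,3) unfolding Seg_def seg_below_def by auto
  moreover then have "(x, c) \<in> R" using preordering_of_total[OF P x] assms(2) by blast
  ultimately show "x \<in> (\<Union>c\<in>Y. seg_below R c)" unfolding seg_below_def by auto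
qed

lemma small_unbounded_fits_in_segment:
  assumes P: "preordering_of X R" and Y: "Y \<subseteq> X" "Y \<notin> Seg X R" and small: "|Y| <o |X|"
  shows "\<exists>x\<in>X. |Y| \<le>o |seg_below R x|"
proof (rule ccontr)
  assume no_large_segment: "\<not> ?thesis"
  have segs_small: "\<forall>c\<in>Y. |seg_below R c| \<le>o |Y|"
  proof
    fix c assume "c \<in> Y"
    then have "\<not> |Y| \<le>o |seg_below R c|" using no_large_segment Y(1) by blast
    then show "|seg_below R c| \<le>o |Y|"
      using not_ordLeq_iff_ordLess[OF card_of_Well_order card_of_Well_order] ordLess_imp_ordLeq
      by blast
  qed
  have "infinite Y"
  proof
    assume "finite Y"
    then have "X = {}" using finite_in_Seg[OF P _ _ Y(1)] Y(2) by blast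
    then have "|Y| <o |Y|" using Y(1) small by simp
    then show False using ordLess_irreflexive by blast
  qed
  then have "|\<Union>c\<in>Y. seg_below R c| \<le>o |Y|"
    using card_of_UNION_ordLeq_infinite[OF _ ordLeq_refl[OF card_of_Card_order] segs_small]
    by blast
  then have "|X| \<le>o |Y|"
    using ordLeq_transitive[OF card_of_mono1[OF unbounded_covered_by_segments[OF P Y]]] by blast
  then show False using small not_ordLess_ordLeq by blast
qed

lemma singular_has_small_unbounded:
  assumes S: "singular_card r" and P: "preordering_of (Field r) R"
  shows "\<exists>Y\<subseteq>Field r. |Y| <o |Field r| \<and> Y \<notin> Seg (Field r) R"
proof (rule ccontr)
  let ?X = "Field r"
  assume no_small_unbounded: "\<not> ?thesis"
  have cr: "Card_order r" using S unfolding singular_card_def by blast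
  have Xr: "|?X| =o r" using card_of_Field_ordIso[OF cr] .
  have small_bounded: "\<exists>x\<in>?X. Y \<subseteq> seg_below R x" if "Y \<subseteq> ?X" "|Y| <o r" for Y
  proof -
    have "|Y| <o |?X|" using ordLess_ordIso_trans[OF that(2) ordIso_symmetric[OF Xr]] .
    then have "Y \<in> Seg ?X R" using no_small_unbounded that(1) by blast
    then show ?thesis unfolding Seg_def by blast
  qed
  obtain K where K: "K \<subseteq> ?X" "cofinal K r" "\<not> |K| =o r"
    using S unfolding singular_card_def regularCard_def by auto
  have "|K| \<le>o r" using ordLeq_ordIso_trans[OF card_of_mono1[OF K(1)] Xr] .
  then have K_small: "|K| <o r" using K(3) ordLeq_iff_ordLess_or_ordIso by blast
  have "\<exists>b\<in>?X. underS r k \<subseteq> seg_below R b" if "k \<in> K" for k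
  proof (rule small_bounded)
    show "underS r k \<subseteq> ?X" unfolding underS_def Field_def by auto
    show "|underS r k| <o r" using card_of_underS[OF cr] that K(1) by blast
  qed
  then obtain b where b: "\<And>k. k \<in> K \<Longrightarrow> b k \<in> ?X \<and> underS r k \<subseteq> seg_below R (b k)"
    by metis
  have "|b ` K| <o r" using ordLeq_ordLess_trans[OF card_of_image K_small] .
  then obtain c where c: "c \<in> ?X" "b ` K \<subseteq> seg_below R c"
    using small_bounded[of "b ` K"] b by blast
  have "?X \<subseteq> seg_below R c"
  proof
    fix a assume "a \<in> ?X"
    then obtain k where k: "k \<in> K" "a \<in> underS r k"
      using K(2) unfolding cofinal_def underS_def by blast
    then have "a \<in> seg_below R (b k)" "(b k, c) \<in> R"
      using b c(2) unfolding seg_below_def by auto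
    then show "a \<in> seg_below R c" using seg_below_mono[OF P] by blast
  qed
  then show False using carrier_notin_Seg[OF P] c(1) unfolding Seg_def by blast
qed

definition pullback_rel :: "'a set \<Rightarrow> ('a \<Rightarrow> 'a) \<Rightarrow> 'a rel \<Rightarrow> 'a rel" where
  "pullback_rel X m R = {(a, b). a \<in> X \<and> b \<in> X \<and> (m a, m b) \<in> R}"

lemma preordering_of_pullback_rel:
  assumes P: "preordering_of X R" and mX: "\<And>a. a \<in> X \<Longrightarrow> m a \<in> X"
    and up: "\<And>a. a \<in> X \<Longrightarrow> (a, m a) \<in> R"
  shows "preordering_of X (pullback_rel X m R)"
  unfolding preordering_of_def
proof (intro conjI)
  show "pullback_rel X m R \<subseteq> X \<times> X" unfolding pullback_rel_def by blast
  show "refl_on X (pullback_rel X m R)"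
    unfolding pullback_rel_def refl_on_def using mX preordering_of_refl[OF P] by blast
  show "trans (pullback_rel X m R)"
    unfolding pullback_rel_def trans_def using preordering_of_trans[OF P] by blast
  show "total_on X (pullback_rel X m R)"
    unfolding pullback_rel_def total_on_def using mX preordering_of_total[OF P] by blast
  show "\<forall>x\<in>X. \<exists>y\<in>X. (y, x) \<notin> pullback_rel X m R"
  proof
    fix x assume "x \<in> X"
    then obtain y where y: "y \<in> X" "(y, m x) \<notin> R" using preordering_of_no_last[OF P] mX by blast
    then have "(m y, m x) \<notin> R" using up preordering_of_trans[OF P] by blast
    then show "\<exists>y\<in>X. (y, x) \<notin> pullback_rel X m R" using y(1) unfolding pullback_rel_def by auto
  qed
qed

lemma seg_below_pullback_rel:
  assumes P: "preordering_of X R" and up: "\<And>a. a \<in> X \<Longrightarrow> (a, m a) \<in> R"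
  shows "seg_below (pullback_rel X m R) x \<subseteq> seg_below R (m x)"
proof
  fix y assume "y \<in> seg_below (pullback_rel X m R) x"
  then have "y \<in> X" "(m y, m x) \<in> R" unfolding seg_below_def pullback_rel_def by auto
  then show "y \<in> seg_below R (m x)"
    unfolding seg_below_def using up preordering_of_trans[OF P] by blast
qed

lemma Seg_pullback_rel_subset:
  assumes P: "preordering_of X R" and mX: "\<And>a. a \<in> X \<Longrightarrow> m a \<in> X"
    and up: "\<And>a. a \<in> X \<Longrightarrow> (a, m a) \<in> R"
  shows "Seg X (pullback_rel X m R) \<subseteq> Seg X R"
proof
  fix Y assume "Y \<in> Seg X (pullback_rel X m R)"
  then obtain x where "x \<in> X" "Y \<subseteq> X" "Y \<subseteq> seg_below (pullback_rel X m R) x"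
    unfolding Seg_def by blast
  moreover note seg_below_pullback_rel[OF P up, of x]
  ultimately show "Y \<in> Seg X R" unfolding Seg_def using mX by blast
qed

lemma Seg_shrinks_if_segment_dominates_unbounded:
  assumes P: "preordering_of X R" and x0: "x0 \<in> X"
    and C: "C \<subseteq> X" "C \<notin> Seg X R" and le: "|C| \<le>o |seg_below R x0|"
  shows "\<exists>R1. preordering_of X R1 \<and> Seg X R1 \<subset> Seg X R"
proof -
  let ?S = "seg_below R x0"
  have "C \<noteq> {}"
  proof
    assume "C = {}"
    then have "C \<subseteq> seg_below R x0" by simp
    then show False using C x0 unfolding Seg_def by blast
  qed
  then obtain g where g: "g ` ?S = C" using card_of_ordLeq2[THEN iffD2, OF _ le] by blast
  define m where "m a = (if a \<in> ?S \<and> (a, g a) \<in> R then g a else a)" for a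
  have gX: "a \<in> ?S \<Longrightarrow> g a \<in> X" for a using g C(1) by blast
  have mX: "a \<in> X \<Longrightarrow> m a \<in> X" for a using gX unfolding m_def by simp
  have up: "a \<in> X \<Longrightarrow> (a, m a) \<in> R" for a
    using preordering_of_refl[OF P] unfolding m_def by auto
  have g_below_m: "(g a, m a) \<in> R" if a: "a \<in> ?S" for a
  proof (cases "(a, g a) \<in> R")
    case True
    then show ?thesis using preordering_of_refl[OF P gX[OF a]] a unfolding m_def by simp
  next
    case False
    moreover have "a \<in> X" using a seg_below_subset[OF P] by blast
    ultimately show ?thesis using preordering_of_total[OF P _ gX[OF a]] a unfolding m_def by auto
  qed
  let ?R1 = "pullback_rel X m R"
  have "?S \<notin> Seg X ?R1"
  proof
    assume "?S \<in> Seg X ?R1"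
    then obtain x where x: "x \<in> X" "?S \<subseteq> seg_below ?R1 x" unfolding Seg_def by auto
    have "C \<subseteq> seg_below R (m x)"
    proof
      fix c assume "c \<in> C"
      then obtain a where a: "a \<in> ?S" "c = g a" using g by auto
      then have "(m a, m x) \<in> R" using x unfolding pullback_rel_def seg_below_def by auto
      then show "c \<in> seg_below R (m x)"
        using g_below_m[OF a(1)] a(2) preordering_of_trans[OF P] unfolding seg_below_def by blast
    qed
    then show False using C mX x(1) unfolding Seg_def by blast
  qed
  then have "Seg X ?R1 \<subset> Seg X R"
    using Seg_pullback_rel_subset[OF P mX up] seg_below_in_Seg[OF P x0] by blast
  then show ?thesis using preordering_of_pullback_rel[OF P mX up] by blast
qed

lemma no_minimal_access_ideal_if_Seg_shrinks:
  assumes shrink: "\<forall>R. preordering_of X R \<longrightarrow> (\<exists>R1. preordering_of X R1 \<and> Seg X R1 \<subset> Seg X R)"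
  shows "\<not> (\<exists>I. minimal_access_ideal X I)"
proof
  assume "\<exists>I. minimal_access_ideal X I"
  then obtain I R where R: "preordering_of X R" "Seg X R \<subseteq> I"
    and minimal: "\<not> (\<exists>J. is_ideal X J \<and> J \<subset> I \<and> access_ideal X J)"
    unfolding minimal_access_ideal_def access_ideal_def by blast
  obtain R1 where R1: "preordering_of X R1" "Seg X R1 \<subset> Seg X R" using shrink R(1) by blast
  have "access_ideal X (Seg X R1)"
    unfolding access_ideal_def using Seg_is_ideal[OF R1(1)] R1(1) by blast
  moreover have "Seg X R1 \<subset> I" using R1(2) R(2) by (rule psubset_subset_trans)
  ultimately show False using minimal Seg_is_ideal[OF R1(1)] by blast
qed

theorem theorem2p11:
  fixes r :: "'a rel"
  assumes "singular_card r"
  shows "\<not> (\<exists>I. minimal_access_ideal (Field r) I)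
    \<and> \<not> minimal_access_ideal (Field r) (Seg (Field r) r)
    \<and> (\<forall>R. preordering_of (Field r) R \<longrightarrow>
          (\<exists>R1. preordering_of (Field r) R1 \<and> Seg (Field r) R1 \<subset> Seg (Field r) R))"
proof -
  have shrink: "\<forall>R. preordering_of (Field r) R \<longrightarrow>
          (\<exists>R1. preordering_of (Field r) R1 \<and> Seg (Field r) R1 \<subset> Seg (Field r) R)"
  proof (intro allI impI)
    fix R assume P: "preordering_of (Field r) R"
    obtain C where C: "C \<subseteq> Field r" "C \<notin> Seg (Field r) R" and small: "|C| <o |Field r|"
      using singular_has_small_unbounded[OF assms P] by blast
    then obtain x0 where "x0 \<in> Field r" "|C| \<le>o |seg_below R x0|"
      using small_unbounded_fits_in_segment[OF P C small] by blast
    then show "\<exists>R1. preordering_of (Field r) R1 \<and> Seg (Field r) R1 \<subset> Seg (Field r) R"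
      using Seg_shrinks_if_segment_dominates_unbounded[OF P _ C] by blast
  qed
  moreover have "\<not> (\<exists>I. minimal_access_ideal (Field r) I)"
    using no_minimal_access_ideal_if_Seg_shrinks[OF shrink] .
  ultimately show ?thesis by blast
qed

end
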